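(* Let $\mathcal{H}$ be a real Hilbert space, let $A\colon \mathcal{H}\rightrightarrows\mathcal{H}$ be maximally monotone, let $B\colon \mathcal{H}\to\mathcal{H}$ be monotone and $L_1$-Lipschitz, and let $C\colon \mathcal{H}\to\mathcal{H}$ be $1/L_2$-cocoercive. Suppose that $(A+B+C)^{-1}(0)\neq\varnothing$ and $\lambda\in\left(0,\frac{2}{4L_1+L_2}\right)$. Given $x_0,x_{-1}\in\mathcal{H}$, define the sequence $(x_k)$ by $$x_{k+1} = J_{\lambda A}\bigl(x_k - 2\lambda B(x_k) + \lambda B(x_{k-1}) -\lambda C(x_k) \bigr) \quad\forall k\in\mathbb{N}.$$ Then $(x_k)$ converges weakly to a point contained in $(A+B+C)^{-1}(0)$.
   Context: $J_{\lambda A}:=(I+\lambda A)^{-1}$ is the resolvent. $C$ is $1/L_2$-cocoercive if $\langle x-y,C(x)-C(y)\rangle\geq \frac{1}{L_2}\|C(x)-C(y)\|^2$ for all $x,y\in\mathcal{H}$. *)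

theory Defs
  imports "HOL-Analysis.Analysis"
begin

text \<open>Set-valued operators on a real Hilbert space are modelled as functions
  'a \<Rightarrow> 'a set (A x is the image set of x); the graph is {(x,u). u \<in> A x}.\<close>

definition monotone_op :: "('a::real_inner \<Rightarrow> 'a set) \<Rightarrow> bool" where
  "monotone_op A \<longleftrightarrow>
     (\<forall>x y u v. u \<in> A x \<longrightarrow> v \<in> A y \<longrightarrow> inner (x - y) (u - v) \<ge> 0)"

definition maximally_monotone :: "('a::real_inner \<Rightarrow> 'a set) \<Rightarrow> bool" where
  "maximally_monotone A \<longleftrightarrow> monotone_op A \<and>
     (\<forall>A'. monotone_op A' \<and> (\<forall>x. A x \<subseteq> A' x) \<longrightarrow> A' = A)"

definition monotone_fun :: "('a::real_inner \<Rightarrow> 'a) \<Rightarrow> bool" where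
  "monotone_fun B \<longleftrightarrow> (\<forall>x y. inner (x - y) (B x - B y) \<ge> 0)"

definition cocoercive :: "real \<Rightarrow> ('a::real_inner \<Rightarrow> 'a) \<Rightarrow> bool" where
  "cocoercive L C \<longleftrightarrow> L > 0 \<and>
     (\<forall>x y. inner (x - y) (C x - C y) \<ge> (1 / L) * (norm (C x - C y))\<^sup>2)"

text \<open>Resolvent J_{\<lambda>A} = (I + \<lambda>A)^{-1}, as the (set-valued) inverse relation:
  p \<in> J z iff z \<in> p + \<lambda> A p.\<close>
definition resolvent :: "real \<Rightarrow> ('a::real_inner \<Rightarrow> 'a set) \<Rightarrow> 'a \<Rightarrow> 'a set" where
  "resolvent lam A z = {p. \<exists>a \<in> A p. z = p + lam *\<^sub>R a}"

definition zeros3 :: "('a::real_inner \<Rightarrow> 'a set) \<Rightarrow> ('a \<Rightarrow> 'a) \<Rightarrow> ('a \<Rightarrow> 'a) \<Rightarrow> 'a set" where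
  "zeros3 A B C = {z. \<exists>a \<in> A z. a + B z + C z = 0}"

definition weakly_converges :: "(nat \<Rightarrow> 'a::real_inner) \<Rightarrow> 'a \<Rightarrow> bool" where
  "weakly_converges x p \<longleftrightarrow> (\<forall>y. (\<lambda>k. inner (x k) y) \<longlonglongrightarrow> inner p y)"

end

theory Submission
  imports Defs "HOL-Library.Diagonal_Subsequence"
begin

text \<open>
  Fix a zero z of A + B + C and consider the Lyapunov function
  energy z x_{k-1} x_k = 1/2 |x_k - z|^2 - lam <x_k - z, B x_k - B x_{k-1}> + lam L1/2 |x_k - x_{k-1}|^2.
  Monotonicity of A and B, the Lipschitz bound on B and the cocoercivity of C show that each step
  decreases it by at least margin |x_{k+1} - x_k|^2, where margin = 1/2 - lam L1 - lam L2/4 is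
  positive exactly because lam < 2/(4 L1 + L2); moreover the energy dominates |x_k - z|^2/4.
  Hence the increments tend to 0, the iterates are bounded and |x_k - z| converges for every zero z.
  Solving the step for the element of A exhibits a point of the graph of A + B + C over x_{k+1}
  whose value tends to 0. The graph of A + (B + C) is closed under weak convergence in the domain
  and strong convergence in the range, so every weak cluster point of the iterates is a zero,
  and Opial's lemma gives weak convergence of the whole sequence.
\<close>

section \<open>Projections, Riesz representation and weak compactness\<close>

lemma parallelogram_law:
  fixes a b :: "'a::real_inner"
  shows "(norm (a + b))\<^sup>2 + (norm (a - b))\<^sup>2 = 2 * (norm a)\<^sup>2 + 2 * (norm b)\<^sup>2"
  by (simp add: power2_norm_eq_inner inner_simps algebra_simps)

lemma convex_dist_square_le:
  fixes K :: "'a::real_inner set"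
  assumes "convex K" and "a \<in> K" and "b \<in> K"
  shows "(dist a b)\<^sup>2 \<le> 2 * (dist y a)\<^sup>2 + 2 * (dist y b)\<^sup>2 - 4 * (infdist y K)\<^sup>2"
proof -
  have "midpoint a b \<in> K"
    using assms by (simp add: midpoint_def convex_def scaleR_add_right)
  then have "infdist y K \<le> dist y (midpoint a b)"
    by (rule infdist_le)
  then have "(infdist y K)\<^sup>2 \<le> (dist y (midpoint a b))\<^sup>2"
    using infdist_nonneg by (rule power_mono)
  moreover have "(y - a) + (y - b) = 2 *\<^sub>R (y - midpoint a b)"
    by (simp add: midpoint_def algebra_simps scaleR_2)
  then have "(norm ((y - a) + (y - b)))\<^sup>2 = 4 * (dist y (midpoint a b))\<^sup>2"
    by (simp add: dist_norm power_mult_distrib)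
  ultimately show ?thesis
    using parallelogram_law[of "y - a" "y - b"] by (simp add: dist_norm norm_minus_commute)
qed

lemma convex_minimizing_sequence_Cauchy:
  fixes K :: "'a::real_inner set"
  assumes "convex K" and ks: "\<And>n. ks n \<in> K" and lim: "(\<lambda>n. dist y (ks n)) \<longlonglongrightarrow> infdist y K"
  shows "Cauchy ks"
proof (rule metric_CauchyI)
  fix e :: real
  assume "0 < e"
  define \<delta> where "\<delta> = infdist y K"
  have "(\<lambda>n. (dist y (ks n))\<^sup>2) \<longlonglongrightarrow> \<delta>\<^sup>2"
    unfolding \<delta>_def by (intro tendsto_intros lim)
  moreover have "\<delta>\<^sup>2 < \<delta>\<^sup>2 + e\<^sup>2 / 4"
    using \<open>0 < e\<close> by simp
  ultimately have "\<forall>\<^sub>F n in sequentially. (dist y (ks n))\<^sup>2 < \<delta>\<^sup>2 + e\<^sup>2 / 4"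
    by (rule order_tendstoD(2))
  then obtain N where N: "\<And>n. n \<ge> N \<Longrightarrow> (dist y (ks n))\<^sup>2 < \<delta>\<^sup>2 + e\<^sup>2 / 4"
    unfolding eventually_sequentially by blast
  have "dist (ks m) (ks n) < e" if "m \<ge> N" "n \<ge> N" for m n
  proof (rule power2_less_imp_less)
    show "(dist (ks m) (ks n))\<^sup>2 < e\<^sup>2"
      using convex_dist_square_le[OF \<open>convex K\<close> ks ks, of m n y] N[OF that(1)] N[OF that(2)]
      unfolding \<delta>_def by linarith
  qed (use \<open>0 < e\<close> in simp)
  then show "\<exists>N. \<forall>m\<ge>N. \<forall>n\<ge>N. dist (ks m) (ks n) < e"
    by blast
qed

lemma closed_convex_closest_point_exists:
  fixes K :: "'a::{real_inner,complete_space} set"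
  assumes "closed K" and "convex K" and "K \<noteq> {}"
  shows "\<exists>q\<in>K. \<forall>k\<in>K. dist y q \<le> dist y k"
proof -
  have "infdist y K \<in> closure ((\<lambda>k. dist y k) ` K)"
    unfolding infdist_notempty[OF \<open>K \<noteq> {}\<close>]
    by (rule closure_contains_Inf) (use \<open>K \<noteq> {}\<close> in \<open>auto intro: bdd_belowI[of _ 0]\<close>)
  then obtain f where f: "\<forall>n. f n \<in> (\<lambda>k. dist y k) ` K" and "f \<longlonglongrightarrow> infdist y K"
    unfolding closure_sequential by blast
  obtain ks where ks: "\<And>n. ks n \<in> K" and f_eq: "\<And>n. f n = dist y (ks n)"
    using f by (auto simp: image_iff) metis
  have lim: "(\<lambda>n. dist y (ks n)) \<longlonglongrightarrow> infdist y K"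
    using \<open>f \<longlonglongrightarrow> infdist y K\<close> by (simp add: f_eq[abs_def])
  then have "Cauchy ks"
    by (rule convex_minimizing_sequence_Cauchy[OF \<open>convex K\<close> ks])
  then obtain q where q: "ks \<longlonglongrightarrow> q"
    using Cauchy_convergent_iff convergent_def by blast
  have "q \<in> K"
    using \<open>closed K\<close> ks q closed_sequentially by blast
  moreover have "dist y q \<le> dist y k" if "k \<in> K" for k
    using LIMSEQ_unique[OF tendsto_dist[OF tendsto_const q] lim] infdist_le[OF that] by simp
  ultimately show ?thesis
    by blast
qed

lemma norm_diff_scaleR_square:
  fixes v k :: "'a::real_inner"
  shows "(norm (v - t *\<^sub>R k))\<^sup>2 = (norm v)\<^sup>2 - 2 * t * inner v k + t\<^sup>2 * inner k k"
  unfolding power2_norm_eq_inner by (simp add: inner_simps inner_commute power2_eq_square algebra_simps)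

lemma orthogonal_projection_exists:
  fixes K :: "'a::{real_inner,complete_space} set"
  assumes "closed K" and "subspace K"
  shows "\<exists>q\<in>K. \<forall>k\<in>K. inner (y - q) k = 0"
proof -
  have "K \<noteq> {}"
    using subspace_0[OF \<open>subspace K\<close>] by blast
  then obtain q where "q \<in> K" and q_closest: "\<And>k. k \<in> K \<Longrightarrow> dist y q \<le> dist y k"
    using closed_convex_closest_point_exists[OF \<open>closed K\<close> subspace_imp_convex[OF \<open>subspace K\<close>]]
    by blast
  have "inner (y - q) k = 0" if "k \<in> K" and "k \<noteq> 0" for k
  proof -
    define c where "c = inner (y - q) k"
    define s where "s = inner k k"
    have "0 < s"
      using \<open>k \<noteq> 0\<close> by (simp add: s_def)
    have "q + (c / s) *\<^sub>R k \<in> K"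
      using \<open>subspace K\<close> \<open>q \<in> K\<close> \<open>k \<in> K\<close> by (simp add: subspace_add subspace_scale)
    then have "(norm (y - q))\<^sup>2 \<le> (norm ((y - q) - (c / s) *\<^sub>R k))\<^sup>2"
      using q_closest by (simp add: dist_norm diff_diff_eq)
    also have "\<dots> = (norm (y - q))\<^sup>2 - 2 * (c / s) * c + (c / s)\<^sup>2 * s"
      unfolding c_def s_def by (rule norm_diff_scaleR_square)
    also have "\<dots> = (norm (y - q))\<^sup>2 - c\<^sup>2 / s"
      using \<open>0 < s\<close> by (simp add: power2_eq_square field_simps)
    finally have "c\<^sup>2 / s \<le> 0"
      by simp
    then show ?thesis
      using \<open>0 < s\<close> by (simp add: c_def divide_le_0_iff)
  qed
  then show ?thesis
    using \<open>q \<in> K\<close> by (metis inner_zero_right)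
qed

lemma Riesz_representation:
  fixes f :: "'a::{real_inner,complete_space} \<Rightarrow> real"
  assumes "bounded_linear f"
  shows "\<exists>p. \<forall>y. f y = inner p y"
proof (cases "\<forall>y. f y = 0")
  case True
  then show ?thesis
    by (intro exI[of _ 0]) simp
next
  case False
  then obtain y0 where "f y0 \<noteq> 0"
    by blast
  interpret f: bounded_linear f
    by fact
  define N where "N = {y. f y = 0}"
  have "closed N"
    unfolding N_def
    by (intro closed_Collect_eq linear_continuous_on assms continuous_on_const)
  moreover have "subspace N"
    unfolding N_def by (rule f.linear_axioms[THEN linear_subspace_kernel])
  ultimately obtain q where "q \<in> N" and q_orth: "\<And>k. k \<in> N \<Longrightarrow> inner (y0 - q) k = 0"
    using orthogonal_projection_exists by blast
  define w where "w = y0 - q"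
  have "f w = f y0"
    using \<open>q \<in> N\<close> by (simp add: w_def N_def f.diff)
  then have "w \<noteq> 0"
    using \<open>f y0 \<noteq> 0\<close> f.zero by auto
  have "f y = inner ((f w / inner w w) *\<^sub>R w) y" for y
  proof -
    have "y - (f y / f w) *\<^sub>R w \<in> N"
      using \<open>f w = f y0\<close> \<open>f y0 \<noteq> 0\<close> by (simp add: N_def f.diff f.scaleR)
    then have "inner w (y - (f y / f w) *\<^sub>R w) = 0"
      unfolding w_def by (rule q_orth)
    then have "inner w y = (f y / f w) * inner w w"
      by (simp add: inner_diff_right)
    then show ?thesis
      using \<open>w \<noteq> 0\<close> \<open>f w = f y0\<close> \<open>f y0 \<noteq> 0\<close> by simp
  qed
  then show ?thesis
    by blast
qed

lemma abs_inner_le_bound: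
  fixes x v :: "'a::real_inner"
  assumes "norm x \<le> M"
  shows "\<bar>inner x v\<bar> \<le> M * norm v"
  using Cauchy_Schwarz_ineq2[of x v] mult_right_mono[OF assms norm_ge_zero[of v]] by linarith

lemma weakly_converges_if_inner_convergent:
  fixes X :: "nat \<Rightarrow> 'a::{real_inner,complete_space}"
  assumes "bounded (range X)" and "\<And>y. convergent (\<lambda>n. inner (X n) y)"
  shows "\<exists>p. weakly_converges X p"
proof -
  obtain M where M: "\<And>n. norm (X n) \<le> M"
    using assms(1) by (auto simp: bounded_iff)
  define f where "f y = lim (\<lambda>n. inner (X n) y)" for y
  have f: "(\<lambda>n. inner (X n) y) \<longlonglongrightarrow> f y" for y
    using assms(2) by (simp add: f_def convergent_LIMSEQ_iff)
  have "bounded_linear f"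
  proof (rule bounded_linear_intro)
    show "f (a + b) = f a + f b" for a b
      using f[of "a + b"] tendsto_add[OF f f] by (simp add: inner_add_right LIMSEQ_unique)
    show "f (c *\<^sub>R a) = c *\<^sub>R f a" for c a
      using f[of "c *\<^sub>R a"] tendsto_mult_left[OF f] by (simp add: LIMSEQ_unique)
    show "norm (f a) \<le> norm a * M" for a
    proof (rule Lim_bounded[OF tendsto_norm[OF f]])
      show "\<forall>n\<ge>0. norm (inner (X n) a) \<le> norm a * M"
        using abs_inner_le_bound[OF M] by (simp add: mult.commute)
    qed
  qed
  then obtain p where p: "\<And>y. f y = inner p y"
    using Riesz_representation by blast
  then have "weakly_converges X p"
    unfolding weakly_converges_def p[symmetric] using f by blast
  then show ?thesis ..
qed

lemma inner_oscillation_le: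
  fixes X :: "nat \<Rightarrow> 'a::real_inner"
  assumes "\<And>n. norm (X n) \<le> M"
  shows "dist (inner (X m) y) (inner (X n) y) \<le> dist (inner (X m) y') (inner (X n) y') + 2 * M * norm (y - y')"
proof -
  have "norm (X m - X n) \<le> 2 * M"
    using norm_triangle_ineq4[of "X m" "X n"] assms[of m] assms[of n] by linarith
  then have "\<bar>inner (X m - X n) (y - y')\<bar> \<le> 2 * M * norm (y - y')"
    by (rule abs_inner_le_bound)
  moreover have "inner (X m) y - inner (X n) y
      = (inner (X m) y' - inner (X n) y') + inner (X m - X n) (y - y')"
    by (simp add: inner_diff_left inner_diff_right)
  ultimately show ?thesis
    unfolding dist_real_def by linarith
qed

lemma inner_convergent_closed:
  fixes X :: "nat \<Rightarrow> 'a::real_inner"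
  assumes "bounded (range X)"
  shows "closed {y. convergent (\<lambda>n. inner (X n) y)}"
  unfolding closed_sequential_limits
proof (intro allI impI, elim conjE)
  fix ys y
  assume ys: "\<forall>k. ys k \<in> {y. convergent (\<lambda>n. inner (X n) y)}" and "ys \<longlonglongrightarrow> y"
  obtain M where M: "\<And>n. norm (X n) \<le> M"
    using assms by (auto simp: bounded_iff)
  have "Cauchy (\<lambda>n. inner (X n) y)"
  proof (rule metric_CauchyI)
    fix e :: real
    assume "0 < e"
    have "(\<lambda>k. 2 * M * norm (y - ys k)) \<longlonglongrightarrow> 2 * M * norm (y - y)"
      using \<open>ys \<longlonglongrightarrow> y\<close> by (intro tendsto_intros)
    moreover have "2 * M * norm (y - y) < e / 2"
      using \<open>0 < e\<close> by simp
    ultimately have "\<forall>\<^sub>F k in sequentially. 2 * M * norm (y - ys k) < e / 2"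
      by (rule order_tendstoD(2))
    then obtain k where "\<forall>j\<ge>k. 2 * M * norm (y - ys j) < e / 2"
      unfolding eventually_sequentially by blast
    then have k: "2 * M * norm (y - ys k) < e / 2"
      by simp
    have "Cauchy (\<lambda>n. inner (X n) (ys k))"
      using ys Cauchy_convergent_iff by blast
    moreover have "0 < e / 2"
      using \<open>0 < e\<close> by simp
    ultimately obtain N where
      N: "\<And>m n. m \<ge> N \<Longrightarrow> n \<ge> N \<Longrightarrow> dist (inner (X m) (ys k)) (inner (X n) (ys k)) < e / 2"
      using metric_CauchyD by blast
    have "dist (inner (X m) y) (inner (X n) y) < e" if "m \<ge> N" "n \<ge> N" for m n
    proof -
      have "dist (inner (X m) y) (inner (X n) y)
          \<le> dist (inner (X m) (ys k)) (inner (X n) (ys k)) + 2 * M * norm (y - ys k)"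
        using M by (rule inner_oscillation_le)
      then show ?thesis
        using N[OF that] k by linarith
    qed
    then show "\<exists>N. \<forall>m\<ge>N. \<forall>n\<ge>N. dist (inner (X m) y) (inner (X n) y) < e"
      by blast
  qed
  then show "y \<in> {y. convergent (\<lambda>n. inner (X n) y)}"
    by (simp add: Cauchy_convergent_iff)
qed

lemma inner_convergent_subspace: "subspace {y. convergent (\<lambda>n. inner (X n) y)}"
  unfolding subspace_def
  by (auto simp: inner_add_right intro: convergent_const convergent_add convergent_mult[OF convergent_const])

lemma inner_convergent_diagonal_subseq:
  fixes X v :: "nat \<Rightarrow> 'a::real_inner"
  assumes "bounded (range X)"
  shows "\<exists>r. strict_mono r \<and> (\<forall>k. convergent (\<lambda>j. inner (X (r j)) (v k)))"
proof -
  obtain M where M: "\<And>n. norm (X n) \<le> M"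
    using assms by (auto simp: bounded_iff)
  interpret subseqs "\<lambda>k s. convergent (\<lambda>j. inner (X (s j)) (v k))"
  proof
    fix k and s :: "nat \<Rightarrow> nat"
    have "bounded (range (\<lambda>j. inner (X (s j)) (v k)))"
      unfolding bounded_iff by (auto intro!: exI[of _ "M * norm (v k)"] abs_inner_le_bound[OF M])
    then obtain l r' where "strict_mono r'" "((\<lambda>j. inner (X (s j)) (v k)) \<circ> r') \<longlonglongrightarrow> l"
      using bounded_imp_convergent_subsequence by blast
    then show "\<exists>r'. strict_mono r' \<and> convergent (\<lambda>j. inner (X ((s \<circ> r') j)) (v k))"
      by (auto simp: convergent_def o_def)
  qed
  have "convergent (\<lambda>j. inner (X (diagseq j)) (v k))" for k
  proof -
    have "convergent (\<lambda>j. inner (X ((diagseq \<circ> (+) (Suc k)) j)) (v k))"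
    proof (rule diagseq_holds)
      fix r s n
      assume "strict_mono (r :: nat \<Rightarrow> nat)" and "convergent (\<lambda>j. inner (X (s j)) (v n))"
      then show "convergent (\<lambda>j. inner (X ((s \<circ> r) j)) (v n))"
        using convergent_subseq_convergent[of "\<lambda>j. inner (X (s j)) (v n)" r] by (simp add: o_def)
    qed
    then obtain l where "(\<lambda>j. inner (X (diagseq (j + Suc k))) (v k)) \<longlonglongrightarrow> l"
      by (auto simp: convergent_def o_def add.commute)
    then show ?thesis
      using LIMSEQ_offset[of "\<lambda>j. inner (X (diagseq j)) (v k)" "Suc k" l] by (auto simp: convergent_def)
  qed
  then show ?thesis
    using subseq_diagseq by blast
qed

lemma bounded_imp_weakly_convergent_subseq:
  fixes X :: "nat \<Rightarrow> 'a::{real_inner,complete_space}"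
  assumes "bounded (range X)"
  shows "\<exists>r p. strict_mono r \<and> weakly_converges (X \<circ> r) p"
proof -
  obtain r where "strict_mono r" and conv: "\<And>k. convergent (\<lambda>j. inner (X (r j)) (X k))"
    using inner_convergent_diagonal_subseq[OF assms] by blast
  define V where "V = {y. convergent (\<lambda>n. inner ((X \<circ> r) n) y)}"
  have bounded_sub: "bounded (range (X \<circ> r))"
    using assms by (rule bounded_subset) auto
  \<comment> \<open>V is a closed subspace containing every X k, and everything orthogonal to all X k is in V.\<close>
  have "y \<in> V" for y
  proof -
    obtain q where "q \<in> V" and q_orth: "\<And>k. k \<in> V \<Longrightarrow> inner (y - q) k = 0"
      using orthogonal_projection_exists inner_convergent_closed[OF bounded_sub]
        inner_convergent_subspace unfolding V_def by blast
    have "X k \<in> V" for k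
      using conv by (simp add: V_def o_def)
    then have "inner ((X \<circ> r) n) (y - q) = 0" for n
      using q_orth[of "X (r n)"] inner_commute[of "X (r n)" "y - q"] by simp
    then have "y - q \<in> V"
      by (simp add: V_def convergent_const)
    then have "q + (y - q) \<in> V"
      using \<open>q \<in> V\<close> inner_convergent_subspace subspace_add unfolding V_def by blast
    then show ?thesis
      by simp
  qed
  then obtain p where "weakly_converges (X \<circ> r) p"
    using weakly_converges_if_inner_convergent[OF bounded_sub] by (auto simp: V_def)
  then show ?thesis
    using \<open>strict_mono r\<close> by blast
qed

section \<open>Weak convergence and Opial's lemma\<close>

lemma weakly_convergesD:
  assumes "weakly_converges x p"
  shows "(\<lambda>n. inner (x n) c) \<longlonglongrightarrow> inner p c"
  using assms unfolding weakly_converges_def by blast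

lemma weakly_convergesD_commute:
  assumes "weakly_converges x p"
  shows "(\<lambda>n. inner c (x n)) \<longlonglongrightarrow> inner c p"
  using weakly_convergesD[OF assms, of c] by (simp add: inner_commute)

lemma weakly_converges_subseq:
  assumes "weakly_converges x p" and "strict_mono r"
  shows "weakly_converges (x \<circ> r) p"
  unfolding weakly_converges_def
  using LIMSEQ_subseq_LIMSEQ[OF weakly_convergesD[OF assms(1)] assms(2)] by (simp add: o_def)

lemma inner_bounded_null_tendsto_zero:
  fixes z w :: "nat \<Rightarrow> 'a::real_inner"
  assumes "bounded (range z)" and "w \<longlonglongrightarrow> 0"
  shows "(\<lambda>n. inner (z n) (w n)) \<longlonglongrightarrow> 0"
proof -
  have "Zfun (\<lambda>n. inner (z n) (w n)) sequentially"
  proof (rule bounded_bilinear.Bfun_prod_Zfun[OF bounded_bilinear_inner])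
    show "Bfun z sequentially"
      using \<open>bounded (range z)\<close> by (simp add: Bseq_eq_bounded)
    show "Zfun w sequentially"
      using \<open>w \<longlonglongrightarrow> 0\<close> by (simp add: tendsto_Zfun_iff)
  qed
  then show ?thesis
    by (simp add: tendsto_Zfun_iff)
qed

lemma weakly_converges_inner_tendsto:
  assumes "weakly_converges z p" and "bounded (range z)" and "w \<longlonglongrightarrow> q"
  shows "(\<lambda>n. inner (z n) (w n)) \<longlonglongrightarrow> inner p q"
proof -
  have "(\<lambda>n. w n - q) \<longlonglongrightarrow> 0"
    using \<open>w \<longlonglongrightarrow> q\<close> by (simp add: LIM_zero)
  then have "(\<lambda>n. inner (z n) (w n - q) + inner (z n) q) \<longlonglongrightarrow> 0 + inner p q"
    by (intro tendsto_add inner_bounded_null_tendsto_zero[OF assms(2)] weakly_convergesD[OF assms(1)])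
  then show ?thesis
    by (simp add: inner_diff_right)
qed

lemma weakly_converges_strong_perturbation:
  assumes "weakly_converges z p" and "(\<lambda>n. w n - z n) \<longlonglongrightarrow> 0"
  shows "weakly_converges w p"
  unfolding weakly_converges_def
proof
  fix c
  have "(\<lambda>n. inner (w n - z n) c + inner (z n) c) \<longlonglongrightarrow> inner 0 c + inner p c"
    by (intro tendsto_intros weakly_convergesD[OF assms(1)] assms(2))
  then show "(\<lambda>n. inner (w n) c) \<longlonglongrightarrow> inner p c"
    by (simp add: inner_diff_left)
qed

lemma weakly_converges_if_unique_cluster_point:
  fixes x :: "nat \<Rightarrow> 'a::{real_inner,complete_space}"
  assumes "bounded (range x)"
    and unique: "\<And>r q. strict_mono r \<Longrightarrow> weakly_converges (x \<circ> r) q \<Longrightarrow> q = p"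
  shows "weakly_converges x p"
  unfolding weakly_converges_def
proof (rule allI, rule ccontr)
  fix c
  assume "\<not> (\<lambda>n. inner (x n) c) \<longlonglongrightarrow> inner p c"
  then obtain e where "0 < e"
    and not_close: "\<not> eventually (\<lambda>n. dist (inner (x n) c) (inner p c) < e) sequentially"
    unfolding tendsto_iff by blast
  obtain s :: "nat \<Rightarrow> nat" where "strict_mono s" and "\<forall>n. \<not> dist (inner (x (s n)) c) (inner p c) < e"
    using not_eventually_sequentiallyD[OF not_close] by blast
  then have far: "e \<le> dist (inner (x (s n)) c) (inner p c)" for n
    by (simp add: not_less)
  have "bounded (range (x \<circ> s))"
    using assms(1) by (rule bounded_subset) auto
  then obtain t q where "strict_mono t" and "weakly_converges (x \<circ> s \<circ> t) q"
    using bounded_imp_weakly_convergent_subseq by blast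
  moreover have "strict_mono (s \<circ> t)"
    using \<open>strict_mono s\<close> \<open>strict_mono t\<close> by (rule strict_mono_o)
  ultimately have "weakly_converges (x \<circ> (s \<circ> t)) p"
    using unique[of "s \<circ> t" q] by (simp add: comp_assoc)
  then have "(\<lambda>n. inner (x (s (t n))) c) \<longlonglongrightarrow> inner p c"
    using weakly_convergesD by (simp add: o_def)
  then have "(\<lambda>n. dist (inner (x (s (t n))) c) (inner p c)) \<longlonglongrightarrow> dist (inner p c) (inner p c)"
    by (intro tendsto_dist tendsto_const)
  then have "e \<le> 0"
    using far by (intro tendsto_lowerbound) auto
  with \<open>0 < e\<close> show False
    by simp
qed

text \<open>The inner product of x n with p - q is an affine combination of the squared distances
  to p and to q, so it converges; its limit is both inner p (p - q) and inner q (p - q).\<close>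
lemma weak_cluster_points_eq:
  assumes "convergent (\<lambda>n. (norm (x n - p))\<^sup>2)" and "convergent (\<lambda>n. (norm (x n - q))\<^sup>2)"
    and "strict_mono r" and "weakly_converges (x \<circ> r) p"
    and "strict_mono s" and "weakly_converges (x \<circ> s) q"
  shows "p = q"
proof -
  have identity: "inner (x n) (p - q) = ((norm p)\<^sup>2 - (norm q)\<^sup>2 + (norm (x n - q))\<^sup>2 - (norm (x n - p))\<^sup>2) / 2"
    for n unfolding power2_norm_eq_inner by (simp add: inner_simps inner_commute algebra_simps)
  obtain Lp Lq where "(\<lambda>n. (norm (x n - p))\<^sup>2) \<longlonglongrightarrow> Lp" and "(\<lambda>n. (norm (x n - q))\<^sup>2) \<longlonglongrightarrow> Lq"
    using assms(1,2) unfolding convergent_def by blast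
  then have "(\<lambda>n. inner (x n) (p - q)) \<longlonglongrightarrow> ((norm p)\<^sup>2 - (norm q)\<^sup>2 + Lq - Lp) / 2"
    unfolding identity by (intro tendsto_intros) auto
  then obtain G where G: "(\<lambda>n. inner (x n) (p - q)) \<longlonglongrightarrow> G"
    by blast
  have "(\<lambda>n. inner ((x \<circ> r) n) (p - q)) \<longlonglongrightarrow> G"
    using LIMSEQ_subseq_LIMSEQ[OF G assms(3)] by (simp add: o_def)
  then have "inner p (p - q) = G"
    using weakly_convergesD[OF assms(4)] LIMSEQ_unique by blast
  have "(\<lambda>n. inner ((x \<circ> s) n) (p - q)) \<longlonglongrightarrow> G"
    using LIMSEQ_subseq_LIMSEQ[OF G assms(5)] by (simp add: o_def)
  then have "inner q (p - q) = G"
    using weakly_convergesD[OF assms(6)] LIMSEQ_unique by blast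
  with \<open>inner p (p - q) = G\<close> have "inner (p - q) (p - q) = 0"
    by (simp add: inner_diff_left)
  then show ?thesis
    by simp
qed

lemma Opial_lemma:
  fixes x :: "nat \<Rightarrow> 'a::{real_inner,complete_space}"
  assumes "bounded (range x)"
    and Fejer: "\<And>z. z \<in> F \<Longrightarrow> convergent (\<lambda>n. (norm (x n - z))\<^sup>2)"
    and cluster: "\<And>r p. strict_mono r \<Longrightarrow> weakly_converges (x \<circ> r) p \<Longrightarrow> p \<in> F"
  shows "\<exists>p\<in>F. weakly_converges x p"
proof -
  obtain r p where "strict_mono r" and "weakly_converges (x \<circ> r) p"
    using bounded_imp_weakly_convergent_subseq[OF assms(1)] by blast
  then have "p \<in> F"
    by (rule cluster)
  have "weakly_converges x p"
  proof (rule weakly_converges_if_unique_cluster_point[OF assms(1)])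
    fix s q
    assume "strict_mono s" and "weakly_converges (x \<circ> s) q"
    then show "q = p"
      using weak_cluster_points_eq[OF Fejer[OF cluster] Fejer[OF \<open>p \<in> F\<close>]]
        \<open>strict_mono r\<close> \<open>weakly_converges (x \<circ> r) p\<close> by blast
  qed
  with \<open>p \<in> F\<close> show ?thesis
    by blast
qed

section \<open>Monotone operators\<close>

lemma maximally_monotone_imp_monotone_op: "maximally_monotone A \<Longrightarrow> monotone_op A"
  by (simp add: maximally_monotone_def)

lemma maximally_monotone_memI:
  assumes "maximally_monotone A"
    and related: "\<And>y v. v \<in> A y \<Longrightarrow> 0 \<le> inner (p - y) (w - v)"
  shows "w \<in> A p"
proof -
  define A' where "A' y = (if y = p then insert w (A y) else A y)" for y
  have "monotone_op A"
    using assms(1) by (rule maximally_monotone_imp_monotone_op)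
  have "monotone_op A'"
    unfolding monotone_op_def
  proof (intro allI impI)
    fix x y u v
    assume "u \<in> A' x" and "v \<in> A' y"
    then consider "x = p" "u = w" "y = p" "v = w" | "x = p" "u = w" "v \<in> A y"
      | "y = p" "v = w" "u \<in> A x" | "u \<in> A x" "v \<in> A y"
      by (auto simp: A'_def split: if_splits)
    then show "0 \<le> inner (x - y) (u - v)"
    proof cases
      case 3
      then show ?thesis
        using related[of u x] by (simp add: inner_diff_left inner_diff_right)
    qed (use related \<open>monotone_op A\<close> in \<open>auto simp: monotone_op_def\<close>)
  qed
  moreover have "A x \<subseteq> A' x" for x
    by (auto simp: A'_def)
  ultimately have "A' = A"
    using assms(1) unfolding maximally_monotone_def by blast
  moreover have "w \<in> A' p"
    by (simp add: A'_def)
  ultimately show ?thesis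
    by simp
qed

lemma monotone_fun_add:
  assumes "monotone_fun B" and "monotone_fun C"
  shows "monotone_fun (\<lambda>x. B x + C x)"
  using assms unfolding monotone_fun_def
  by (metis add_nonneg_nonneg add_diff_add inner_add_right)

lemma cocoercive_imp_monotone_fun:
  assumes "cocoercive L C"
  shows "monotone_fun C"
  unfolding monotone_fun_def
proof (intro allI)
  fix x y
  have "0 \<le> (1 / L) * (norm (C x - C y))\<^sup>2"
    using assms by (simp add: cocoercive_def)
  also have "\<dots> \<le> inner (x - y) (C x - C y)"
    using assms by (simp add: cocoercive_def)
  finally show "0 \<le> inner (x - y) (C x - C y)" .
qed

lemma cocoercive_imp_lipschitz:
  assumes "cocoercive L C"
  shows "L-lipschitz_on UNIV C"
proof (rule lipschitz_onI)
  show "0 \<le> L"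
    using assms by (simp add: cocoercive_def)
  fix x y :: 'a
  have "0 < L"
    using assms by (simp add: cocoercive_def)
  have "(1 / L) * (norm (C x - C y))\<^sup>2 \<le> inner (x - y) (C x - C y)"
    using assms by (simp add: cocoercive_def)
  also have "\<dots> \<le> norm (x - y) * norm (C x - C y)"
    using Cauchy_Schwarz_ineq2 by (rule abs_le_D1)
  finally have "norm (C x - C y) * norm (C x - C y) \<le> L * norm (x - y) * norm (C x - C y)"
    using \<open>0 < L\<close> by (simp add: power2_eq_square field_simps)
  then show "dist (C x) (C y) \<le> L * dist x y"
    using \<open>0 < L\<close> by (cases "C x = C y") (auto simp: dist_norm)
qed

text \<open>Minty's trick: testing the variational inequality at the points p - t (D p - d)
  and letting t tend to 0 forces d = D p.\<close>
lemma variational_inequality_imp_eq: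
  assumes "isCont D p" and ineq: "\<And>y. 0 \<le> inner (p - y) (d - D y)"
  shows "d = D p"
proof -
  define w where "w = D p - d"
  have pos: "0 \<le> inner w (d - D (p - t *\<^sub>R w))" if "0 < t" for t
    using ineq[of "p - t *\<^sub>R w"] that by (simp add: zero_le_mult_iff)
  have nonneg: "\<forall>\<^sub>F t in at_right 0. 0 \<le> inner w (d - D (p - t *\<^sub>R w))"
    using eventually_at_right_less[of "0::real"] by (rule eventually_mono) (rule pos)
  have "((\<lambda>t. p - t *\<^sub>R w) \<longlongrightarrow> p - 0 *\<^sub>R w) (at_right 0)"
    by (intro tendsto_intros)
  then have "((\<lambda>t. D (p - t *\<^sub>R w)) \<longlongrightarrow> D p) (at_right 0)"
    using isCont_tendsto_compose[OF assms(1)] by simp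
  then have "((\<lambda>t. inner w (d - D (p - t *\<^sub>R w))) \<longlongrightarrow> inner w (d - D p)) (at_right 0)"
    by (intro tendsto_intros)
  then have "0 \<le> inner w (d - D p)"
    using nonneg by (rule tendsto_lowerbound) simp
  then have "inner w w \<le> 0"
    by (simp add: w_def inner_diff_right inner_commute)
  then have "inner w w = 0"
    using inner_ge_zero[of w] by linarith
  then show ?thesis
    by (simp add: w_def)
qed

context
  fixes A :: "'a::real_inner \<Rightarrow> 'a set" and D :: "'a \<Rightarrow> 'a"
    and z u :: "nat \<Rightarrow> 'a" and p d :: 'a
  assumes A_mono: "monotone_op A" and D_mono: "monotone_fun D"
    and graph: "\<And>n. u n - D (z n) \<in> A (z n)" and u_lim: "u \<longlonglongrightarrow> 0"
    and z_bounded: "bounded (range z)" and z_weak: "weakly_converges z p"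
    and Dz_weak: "weakly_converges (\<lambda>n. D (z n)) d"
begin

text \<open>In both inequalities below, adding the monotonicity inequality of D cancels the
  term inner (z n) (D (z n)), the only one without a weak limit.\<close>
lemma weak_limit_monotonically_related:
  assumes "v \<in> A y"
  shows "0 \<le> inner (p - y) (- d - v)"
proof -
  have "0 \<le> inner (z n - y) (u n - D (z n) - v) + inner (z n - p) (D (z n) - D p)" for n
    using A_mono graph[of n] assms D_mono unfolding monotone_op_def monotone_fun_def
    by (meson add_nonneg_nonneg)
  also have "inner (z n - y) (u n - D (z n) - v) + inner (z n - p) (D (z n) - D p)
      = inner (z n) (u n) - inner y (u n) + inner (y - p) (D (z n))
        - inner (z n) v + inner y v - inner (z n) (D p) + inner p (D p)" for n
    by (simp add: inner_diff_left inner_diff_right algebra_simps)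
  finally have nonneg: "0 \<le> inner (z n) (u n) - inner y (u n) + inner (y - p) (D (z n))
        - inner (z n) v + inner y v - inner (z n) (D p) + inner p (D p)" for n .
  have "(\<lambda>n. inner (z n) (u n) - inner y (u n) + inner (y - p) (D (z n))
        - inner (z n) v + inner y v - inner (z n) (D p) + inner p (D p))
      \<longlonglongrightarrow> inner p 0 - inner y 0 + inner (y - p) d - inner p v + inner y v - inner p (D p) + inner p (D p)"
    by (intro tendsto_intros weakly_converges_inner_tendsto[OF z_weak z_bounded u_lim]
        weakly_convergesD[OF z_weak] weakly_convergesD_commute[OF Dz_weak] u_lim)
  from tendsto_lowerbound[OF this always_eventually[OF allI[OF nonneg]]]
  show ?thesis
    by (simp add: inner_diff_left inner_diff_right algebra_simps)
qed

lemma weak_limit_variational_inequality: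
  assumes "- d \<in> A p"
  shows "0 \<le> inner (p - y) (d - D y)"
proof -
  have "0 \<le> inner (z n - p) (u n - D (z n) - (- d)) + inner (z n - y) (D (z n) - D y)" for n
    using A_mono graph[of n] assms D_mono unfolding monotone_op_def monotone_fun_def
    by (meson add_nonneg_nonneg)
  also have "inner (z n - p) (u n - D (z n) - (- d)) + inner (z n - y) (D (z n) - D y)
      = inner (z n) (u n) - inner p (u n) + inner (p - y) (D (z n))
        + inner (z n) d - inner p d - inner (z n) (D y) + inner y (D y)" for n
    by (simp add: inner_diff_left inner_diff_right algebra_simps)
  finally have nonneg: "0 \<le> inner (z n) (u n) - inner p (u n) + inner (p - y) (D (z n))
        + inner (z n) d - inner p d - inner (z n) (D y) + inner y (D y)" for n .
  have "(\<lambda>n. inner (z n) (u n) - inner p (u n) + inner (p - y) (D (z n))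
        + inner (z n) d - inner p d - inner (z n) (D y) + inner y (D y))
      \<longlonglongrightarrow> inner p 0 - inner p 0 + inner (p - y) d + inner p d - inner p d - inner p (D y) + inner y (D y)"
    by (intro tendsto_intros weakly_converges_inner_tendsto[OF z_weak z_bounded u_lim]
        weakly_convergesD[OF z_weak] weakly_convergesD_commute[OF Dz_weak] u_lim)
  from tendsto_lowerbound[OF this always_eventually[OF allI[OF nonneg]]]
  show ?thesis
    by (simp add: inner_diff_left inner_diff_right algebra_simps)
qed

end

lemma lipschitz_bounded_image:
  fixes f :: "'a::real_normed_vector \<Rightarrow> 'b::real_normed_vector"
  assumes "L-lipschitz_on UNIV f" and "bounded S"
  shows "bounded (f ` S)"
proof -
  obtain M where M: "\<And>x. x \<in> S \<Longrightarrow> norm x \<le> M"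
    using assms(2) by (auto simp: bounded_iff)
  have "norm (f x) \<le> norm (f 0) + L * M" if "x \<in> S" for x
  proof -
    have "norm (f x - f 0) \<le> L * norm x"
      using lipschitz_onD[OF assms(1), of x 0] by (simp add: dist_norm)
    also have "\<dots> \<le> L * M"
      using M[OF that] lipschitz_on_nonneg[OF assms(1)] by (rule mult_left_mono)
    finally show ?thesis
      using norm_triangle_sub[of "f x" "f 0"] by linarith
  qed
  then show ?thesis
    by (auto simp: bounded_iff)
qed

text \<open>A + D is not known to be maximally monotone, so the limit is reached through a weak cluster
  point d of D (z n): maximality of A gives - d \<in> A p, and Minty's trick gives d = D p.\<close>
lemma maximally_monotone_add_lipschitz_demiclosed:
  fixes A :: "'a::{real_inner,complete_space} \<Rightarrow> 'a set"
  assumes "maximally_monotone A" and "monotone_fun D" and "L-lipschitz_on UNIV D"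
    and "\<And>n. u n - D (z n) \<in> A (z n)" and "u \<longlonglongrightarrow> 0"
    and "bounded (range z)" and "weakly_converges z p"
  shows "- D p \<in> A p"
proof -
  have "monotone_op A"
    using assms(1) by (rule maximally_monotone_imp_monotone_op)
  have "bounded (D ` range z)"
    using assms(3,6) by (rule lipschitz_bounded_image)
  then have "bounded (range (\<lambda>n. D (z n)))"
    by (simp add: image_image)
  then obtain r d where "strict_mono r" and Dz_weak: "weakly_converges ((\<lambda>n. D (z n)) \<circ> r) d"
    using bounded_imp_weakly_convergent_subseq by blast
  have z_weak: "weakly_converges (z \<circ> r) p"
    using assms(7) \<open>strict_mono r\<close> by (rule weakly_converges_subseq)
  have "bounded (range (z \<circ> r))"
    using assms(6) by (rule bounded_subset) auto
  note related = weak_limit_monotonically_related[OF \<open>monotone_op A\<close> assms(2), of "u \<circ> r" "z \<circ> r"]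
    and variational = weak_limit_variational_inequality[OF \<open>monotone_op A\<close> assms(2), of "u \<circ> r" "z \<circ> r"]
  have hyps: "\<And>n. (u \<circ> r) n - D ((z \<circ> r) n) \<in> A ((z \<circ> r) n)" "(u \<circ> r) \<longlonglongrightarrow> 0"
    using assms(4) LIMSEQ_subseq_LIMSEQ[OF assms(5) \<open>strict_mono r\<close>] by auto
  have "- d \<in> A p"
    using assms(1) related[OF hyps \<open>bounded (range (z \<circ> r))\<close> z_weak] Dz_weak
    by (auto intro: maximally_monotone_memI simp: o_def)
  moreover have "isCont D p"
    using lipschitz_on_continuous_on[OF assms(3)] by (simp add: continuous_on_eq_continuous_at)
  ultimately have "d = D p"
    using variational[OF hyps \<open>bounded (range (z \<circ> r))\<close> z_weak] Dz_weak
    by (intro variational_inequality_imp_eq) (auto simp: o_def)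
  then show ?thesis
    using \<open>- d \<in> A p\<close> by simp
qed

section \<open>The forward-reflected-backward iteration\<close>

lemma abs_inner_le_half_sum_squares:
  fixes v e w :: "'a::real_inner"
  assumes "norm e \<le> L * norm w" and "0 \<le> L"
  shows "\<bar>inner v e\<bar> \<le> L / 2 * ((norm v)\<^sup>2 + (norm w)\<^sup>2)"
proof -
  have "\<bar>inner v e\<bar> \<le> norm v * (L * norm w)"
    using Cauchy_Schwarz_ineq2[of v e] mult_left_mono[OF assms(1) norm_ge_zero[of v]] by linarith
  also have "\<dots> \<le> L / 2 * ((norm v)\<^sup>2 + (norm w)\<^sup>2)"
    using mult_left_mono[OF sum_squares_bound[of "norm v" "norm w"] \<open>0 \<le> L\<close>]
    by (simp add: power2_eq_square algebra_simps)
  finally show ?thesis .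
qed

lemma cocoercive_inner_perturbation_ge:
  assumes "cocoercive L C"
  shows "- (L / 4) * (norm h)\<^sup>2 \<le> inner (x - y) (C x - C y) + inner h (C x - C y)"
proof -
  define c where "c = norm (C x - C y)"
  have "0 < L"
    using assms by (simp add: cocoercive_def)
  have "c\<^sup>2 / L \<le> inner (x - y) (C x - C y)"
    using assms by (simp add: cocoercive_def c_def)
  moreover have "- (norm h * c) \<le> inner h (C x - C y)"
    using Cauchy_Schwarz_ineq2[of h "C x - C y"] by (simp add: c_def)
  moreover have "- (L / 4) * (norm h)\<^sup>2 \<le> c\<^sup>2 / L - norm h * c"
  proof -
    have "0 \<le> (2 * c - L * norm h)\<^sup>2 / (4 * L)"
      using \<open>0 < L\<close> by simp
    also have "\<dots> = c\<^sup>2 / L - norm h * c + L / 4 * (norm h)\<^sup>2"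
      using \<open>0 < L\<close> by (simp add: field_simps power2_eq_square)
    finally show ?thesis
      by simp
  qed
  ultimately show ?thesis
    by linarith
qed

lemma lipschitz_diff_tendsto_zero:
  fixes D :: "'a::real_normed_vector \<Rightarrow> 'b::real_normed_vector"
  assumes "L-lipschitz_on UNIV D" and "(\<lambda>k. y k - w k) \<longlonglongrightarrow> 0"
  shows "(\<lambda>k. D (y k) - D (w k)) \<longlonglongrightarrow> 0"
proof (rule Lim_null_comparison)
  show "\<forall>\<^sub>F k in sequentially. norm (D (y k) - D (w k)) \<le> L * norm (y k - w k)"
    using lipschitz_onD[OF assms(1)] by (simp add: dist_norm)
  show "(\<lambda>k. L * norm (y k - w k)) \<longlonglongrightarrow> 0"
    using tendsto_mult_right_zero[OF tendsto_norm_zero[OF assms(2)]] .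
qed

lemma sufficient_decrease_convergent:
  fixes E e :: "nat \<Rightarrow> real"
  assumes descent: "\<And>k. E (Suc k) + e k \<le> E k" and "\<And>k. 0 \<le> e k" and "\<And>k. 0 \<le> E k"
  shows "convergent E" and "e \<longlonglongrightarrow> 0"
proof -
  have "E (Suc k) \<le> E k" for k
    using descent[of k] assms(2)[of k] by linarith
  then have "decseq E"
    by (rule decseq_SucI)
  then obtain L where "E \<longlonglongrightarrow> L"
    using decseq_convergent assms(3) by blast
  then show "convergent E"
    by (auto simp: convergent_def)
  show "e \<longlonglongrightarrow> 0"
  proof (rule tendsto_sandwich[where f = "\<lambda>_. 0" and h = "\<lambda>k. E k - E (Suc k)"])
    show "\<forall>\<^sub>F k in sequentially. 0 \<le> e k"
      using assms(2) by simp
    have "e k \<le> E k - E (Suc k)" for k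
      using descent[of k] by linarith
    then show "\<forall>\<^sub>F k in sequentially. e k \<le> E k - E (Suc k)"
      by simp
    have "(\<lambda>k. E k - E (Suc k)) \<longlonglongrightarrow> L - L"
      using \<open>E \<longlonglongrightarrow> L\<close> by (intro tendsto_diff LIMSEQ_Suc)
    then show "(\<lambda>k. E k - E (Suc k)) \<longlonglongrightarrow> 0"
      by simp
  qed simp
qed

locale forward_reflected_backward =
  fixes A :: "'a::{real_inner,complete_space} \<Rightarrow> 'a set" and B C :: "'a \<Rightarrow> 'a"
    and L1 L2 lam :: real
  assumes A_max: "maximally_monotone A" and B_mono: "monotone_fun B"
    and B_lip: "L1-lipschitz_on UNIV B" and C_coco: "cocoercive L2 C"
    and lam_pos: "0 < lam" and lam_less: "lam < 2 / (4 * L1 + L2)"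
begin

lemma L1_nonneg: "0 \<le> L1"
  using B_lip by (rule lipschitz_on_nonneg)

lemma A_mono: "monotone_op A"
  using A_max by (rule maximally_monotone_imp_monotone_op)

lemma L2_pos: "0 < L2"
  using C_coco by (simp add: cocoercive_def)

lemma B_norm_diff_le: "norm (B u - B v) \<le> L1 * norm (u - v)"
  using lipschitz_onD[OF B_lip, of u v] by (simp add: dist_norm)

definition margin :: real
  where "margin = 1 / 2 - lam * L1 - lam * L2 / 4"

lemma margin_pos: "0 < margin"
proof -
  have "0 < 4 * L1 + L2"
    using L1_nonneg L2_pos by simp
  then have "lam * (4 * L1 + L2) < 2"
    using lam_less by (simp add: pos_less_divide_eq mult.commute)
  then show ?thesis
    by (simp add: margin_def algebra_simps)
qed

definition energy :: "'a \<Rightarrow> 'a \<Rightarrow> 'a \<Rightarrow> real"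
  where "energy z u v = 1 / 2 * (norm (v - z))\<^sup>2 - lam * inner (v - z) (B v - B u)
    + lam * L1 / 2 * (norm (v - u))\<^sup>2"

lemma energy_ge_dist: "1 / 4 * (norm (v - z))\<^sup>2 \<le> energy z u v"
proof -
  have "lam * L1 \<le> 1 / 2"
    using margin_pos mult_pos_pos[OF lam_pos L2_pos] unfolding margin_def by linarith
  then have "lam * L1 * (norm (v - z))\<^sup>2 \<le> 1 / 2 * (norm (v - z))\<^sup>2"
    by (intro mult_right_mono) auto
  moreover have "inner (v - z) (B v - B u) \<le> L1 / 2 * ((norm (v - z))\<^sup>2 + (norm (v - u))\<^sup>2)"
    using abs_inner_le_half_sum_squares[OF B_norm_diff_le[of v u] L1_nonneg] by (rule abs_le_D1)
  then have "lam * inner (v - z) (B v - B u)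
      \<le> lam * (L1 / 2 * ((norm (v - z))\<^sup>2 + (norm (v - u))\<^sup>2))"
    using lam_pos by (simp add: mult_left_mono)
  ultimately show ?thesis
    unfolding energy_def by (simp add: algebra_simps)
qed

lemma resolvent_step_monotonicity:
  assumes "z \<in> zeros3 A B C"
    and "w \<in> resolvent lam A (v - (2 * lam) *\<^sub>R B v + lam *\<^sub>R B u - lam *\<^sub>R C v)"
  shows "0 \<le> inner (w - z) (v - w) - lam * inner (w - z) (B w - B z) + lam * inner (w - z) (B w - B v)
    - lam * inner (w - z) (B v - B u) - lam * inner (w - z) (C v - C z)"
proof -
  obtain a where "a \<in> A w" and a: "v - (2 * lam) *\<^sub>R B v + lam *\<^sub>R B u - lam *\<^sub>R C v = w + lam *\<^sub>R a"
    using assms(2) unfolding resolvent_def by blast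
  obtain az where "az \<in> A z" and az: "az + B z + C z = 0"
    using assms(1) unfolding zeros3_def by blast
  have la: "lam *\<^sub>R a = v - (2 * lam) *\<^sub>R B v + lam *\<^sub>R B u - lam *\<^sub>R C v - w"
    by (simp only: a) simp
  have "az = - (B z + C z)"
    using az unfolding eq_neg_iff_add_eq_0 by (simp add: add.assoc)
  then have laz: "lam *\<^sub>R az = - lam *\<^sub>R B z - lam *\<^sub>R C z"
    by (simp add: scaleR_diff_right)
  have two: "(2 * lam) *\<^sub>R B v = lam *\<^sub>R B v + lam *\<^sub>R B v"
    by (metis scaleR_2 scaleR_scaleR)
  have step: "lam *\<^sub>R (a - az) = (v - w) - lam *\<^sub>R (B w - B z) + lam *\<^sub>R (B w - B v)
      - lam *\<^sub>R (B v - B u) - lam *\<^sub>R (C v - C z)"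
    unfolding scaleR_diff_right la laz two by (simp add: algebra_simps)
  have "0 \<le> inner (w - z) (a - az)"
    using A_mono \<open>a \<in> A w\<close> \<open>az \<in> A z\<close> unfolding monotone_op_def by blast
  then have "0 \<le> lam * inner (w - z) (a - az)"
    using lam_pos by simp
  also have "\<dots> = inner (w - z) (lam *\<^sub>R (a - az))"
    by simp
  also have "\<dots> = inner (w - z) (v - w) - lam * inner (w - z) (B w - B z) + lam * inner (w - z) (B w - B v)
      - lam * inner (w - z) (B v - B u) - lam * inner (w - z) (C v - C z)"
    unfolding step by (simp only: inner_diff_right inner_add_right inner_scaleR_right)
  finally show ?thesis .
qed

lemma energy_descent:
  assumes "z \<in> zeros3 A B C"
    and "w \<in> resolvent lam A (v - (2 * lam) *\<^sub>R B v + lam *\<^sub>R B u - lam *\<^sub>R C v)"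
  shows "energy z v w + margin * (norm (w - v))\<^sup>2 \<le> energy z u v"
proof -
  have shift: "inner (w - z) h = inner (v - z) h + inner (w - v) h" for h
    by (simp add: inner_diff_left)
  have "0 \<le> inner (w - z) (v - w) - lam * inner (w - z) (B w - B z) + lam * inner (w - z) (B w - B v)
      - lam * (inner (v - z) (B v - B u) + inner (w - v) (B v - B u))
      - lam * (inner (v - z) (C v - C z) + inner (w - v) (C v - C z))"
    using resolvent_step_monotonicity[OF assms] unfolding shift[of "B v - B u"] shift[of "C v - C z"] .
  moreover have "inner (w - z) (v - w) = 1 / 2 * ((norm (v - z))\<^sup>2 - (norm (w - z))\<^sup>2 - (norm (w - v))\<^sup>2)"
    unfolding power2_norm_eq_inner by (simp add: inner_simps inner_commute algebra_simps)
  moreover have "0 \<le> inner (w - z) (B w - B z)"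
    using B_mono unfolding monotone_fun_def by blast
  then have "0 \<le> lam * inner (w - z) (B w - B z)"
    using lam_pos by simp
  moreover have "- inner (w - v) (B v - B u) \<le> L1 / 2 * ((norm (w - v))\<^sup>2 + (norm (v - u))\<^sup>2)"
    using abs_inner_le_half_sum_squares[OF B_norm_diff_le[of v u] L1_nonneg] by (rule abs_le_D2)
  then have "lam * (- inner (w - v) (B v - B u)) \<le> lam * (L1 / 2 * ((norm (w - v))\<^sup>2 + (norm (v - u))\<^sup>2))"
    using lam_pos by (intro mult_left_mono) simp_all
  moreover have "lam * (- (L2 / 4) * (norm (w - v))\<^sup>2)
      \<le> lam * (inner (v - z) (C v - C z) + inner (w - v) (C v - C z))"
    using lam_pos by (intro mult_left_mono cocoercive_inner_perturbation_ge[OF C_coco]) simp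
  ultimately show ?thesis
    unfolding energy_def margin_def by (simp add: algebra_simps)
qed

end

locale forward_reflected_backward_sequence = forward_reflected_backward +
  fixes x :: "nat \<Rightarrow> 'a"
  assumes step: "\<And>k. x (Suc (Suc k)) \<in> resolvent lam A
    (x (Suc k) - (2 * lam) *\<^sub>R B (x (Suc k)) + lam *\<^sub>R B (x k) - lam *\<^sub>R C (x (Suc k)))"
begin

lemma energy_convergent_and_increments_tendsto_zero:
  assumes "z \<in> zeros3 A B C"
  shows "convergent (\<lambda>k. energy z (x k) (x (Suc k)))"
    and "(\<lambda>k. x (Suc k) - x k) \<longlonglongrightarrow> 0"
proof -
  note descent = energy_descent[OF assms step]
  have nonneg: "0 \<le> energy z (x k) (x (Suc k))" for k
    using energy_ge_dist[of "x (Suc k)" z "x k"] zero_le_power2[of "norm (x (Suc k) - z)"] by linarith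
  have "0 \<le> margin * (norm (x (Suc (Suc k)) - x (Suc k)))\<^sup>2" for k
    using margin_pos by (intro mult_nonneg_nonneg) simp_all
  note descending = sufficient_decrease_convergent[where E = "\<lambda>k. energy z (x k) (x (Suc k))"
      and e = "\<lambda>k. margin * (norm (x (Suc (Suc k)) - x (Suc k)))\<^sup>2", OF descent this nonneg]
  show "convergent (\<lambda>k. energy z (x k) (x (Suc k)))"
    by (rule descending(1))
  have "(\<lambda>k. margin * (norm (x (Suc (Suc k)) - x (Suc k)))\<^sup>2 / margin) \<longlonglongrightarrow> 0 / margin"
    using margin_pos by (intro tendsto_divide descending(2) tendsto_const) simp
  then have "(\<lambda>k. (norm (x (Suc (Suc k)) - x (Suc k)))\<^sup>2) \<longlonglongrightarrow> 0"
    using margin_pos by simp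
  then have "(\<lambda>k. sqrt ((norm (x (Suc (Suc k)) - x (Suc k)))\<^sup>2)) \<longlonglongrightarrow> sqrt 0"
    by (rule tendsto_real_sqrt)
  then have "(\<lambda>k. norm (x (Suc (Suc k)) - x (Suc k))) \<longlonglongrightarrow> 0"
    by simp
  then have "(\<lambda>k. x (Suc (Suc k)) - x (Suc k)) \<longlonglongrightarrow> 0"
    by (simp only: tendsto_norm_zero_iff)
  then show "(\<lambda>k. x (Suc k) - x k) \<longlonglongrightarrow> 0"
    by (rule LIMSEQ_imp_Suc)
qed

lemma bounded_iterates:
  assumes "z \<in> zeros3 A B C"
  shows "bounded (range x)"
proof -
  obtain K where K: "\<And>k. \<bar>energy z (x k) (x (Suc k))\<bar> \<le> K"
    using convergent_imp_Bseq[OF energy_convergent_and_increments_tendsto_zero(1)[OF assms]]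
    by (auto simp: Bseq_def)
  have dist_bound: "norm (x (Suc k) - z) \<le> sqrt (4 * K)" for k
    using energy_ge_dist[of "x (Suc k)" z "x k"] K[of k] by (intro real_le_rsqrt) linarith
  have bound: "norm (x (Suc k)) \<le> norm z + sqrt (4 * K)" for k
    using norm_triangle_sub[of "x (Suc k)" z] dist_bound[of k] by linarith
  have "0 \<le> norm z + sqrt (4 * K)"
    using bound[of 0] norm_ge_zero[of "x (Suc 0)"] by linarith
  have "norm (x k) \<le> norm (x 0) + (norm z + sqrt (4 * K))" for k
  proof (cases k)
    case 0
    then show ?thesis
      using \<open>0 \<le> norm z + sqrt (4 * K)\<close> by simp
  next
    case (Suc j)
    show ?thesis
      using bound[of j] norm_ge_zero[of "x 0"] unfolding \<open>k = Suc j\<close> by linarith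
  qed
  then show ?thesis
    by (auto simp: bounded_iff)
qed

lemma dist_to_zero_convergent:
  assumes "z \<in> zeros3 A B C"
  shows "convergent (\<lambda>k. (norm (x k - z))\<^sup>2)"
proof -
  obtain E where E: "(\<lambda>k. energy z (x k) (x (Suc k))) \<longlonglongrightarrow> E"
    using energy_convergent_and_increments_tendsto_zero(1)[OF assms] by (auto simp: convergent_def)
  note incr = energy_convergent_and_increments_tendsto_zero(2)[OF assms]
  have "bounded (range (\<lambda>k. x (Suc k) - z))"
    using bounded_translation_minus[OF bounded_iterates[OF assms], of z] by (rule bounded_subset) auto
  then have "(\<lambda>k. inner (x (Suc k) - z) (B (x (Suc k)) - B (x k))) \<longlonglongrightarrow> 0"
    using lipschitz_diff_tendsto_zero[OF B_lip incr] by (rule inner_bounded_null_tendsto_zero)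
  then have "(\<lambda>k. 2 * energy z (x k) (x (Suc k)) + 2 * lam * inner (x (Suc k) - z) (B (x (Suc k)) - B (x k))
      - lam * L1 * (norm (x (Suc k) - x k))\<^sup>2) \<longlonglongrightarrow> 2 * E + 2 * lam * 0 - lam * L1 * (norm (0 :: 'a))\<^sup>2"
    by (intro tendsto_intros E incr)
  then have "(\<lambda>k. (norm (x (Suc k) - z))\<^sup>2) \<longlonglongrightarrow> 2 * E"
    by (simp add: energy_def algebra_simps)
  then show ?thesis
    unfolding convergent_def by (blast intro: LIMSEQ_imp_Suc)
qed

definition residual :: "nat \<Rightarrow> 'a"
  where "residual k = (1 / lam) *\<^sub>R (x (Suc k) - x (Suc (Suc k)))
    + (B (x (Suc (Suc k))) - B (x (Suc k))) - (B (x (Suc k)) - B (x k))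
    + (C (x (Suc (Suc k))) - C (x (Suc k)))"

lemma residual_mem: "residual k - (B (x (Suc (Suc k))) + C (x (Suc (Suc k)))) \<in> A (x (Suc (Suc k)))"
proof -
  obtain a where "a \<in> A (x (Suc (Suc k)))" and a: "x (Suc k) - (2 * lam) *\<^sub>R B (x (Suc k))
      + lam *\<^sub>R B (x k) - lam *\<^sub>R C (x (Suc k)) = x (Suc (Suc k)) + lam *\<^sub>R a"
    using step[of k] unfolding resolvent_def by blast
  have two: "(2 * lam) *\<^sub>R B (x (Suc k)) = lam *\<^sub>R B (x (Suc k)) + lam *\<^sub>R B (x (Suc k))"
    by (metis scaleR_2 scaleR_scaleR)
  have "lam *\<^sub>R (residual k - (B (x (Suc (Suc k))) + C (x (Suc (Suc k)))))
      = x (Suc k) - (2 * lam) *\<^sub>R B (x (Suc k)) + lam *\<^sub>R B (x k) - lam *\<^sub>R C (x (Suc k))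
        - x (Suc (Suc k))"
    using lam_pos unfolding residual_def two by (simp add: scaleR_diff_right scaleR_add_right algebra_simps)
  also have "\<dots> = lam *\<^sub>R a"
    unfolding a by simp
  finally have "residual k - (B (x (Suc (Suc k))) + C (x (Suc (Suc k)))) = a"
    using lam_pos by simp
  with \<open>a \<in> A (x (Suc (Suc k)))\<close> show ?thesis
    by simp
qed

lemma residual_tendsto_zero:
  assumes "z \<in> zeros3 A B C"
  shows "residual \<longlonglongrightarrow> 0"
proof -
  note incr = energy_convergent_and_increments_tendsto_zero(2)[OF assms]
  have incr_Suc: "(\<lambda>k. x (Suc (Suc k)) - x (Suc k)) \<longlonglongrightarrow> 0"
    using LIMSEQ_Suc[OF incr] .
  have "(\<lambda>k. (1 / lam) *\<^sub>R - (x (Suc (Suc k)) - x (Suc k))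
      + (B (x (Suc (Suc k))) - B (x (Suc k))) - (B (x (Suc k)) - B (x k))
      + (C (x (Suc (Suc k))) - C (x (Suc k)))) \<longlonglongrightarrow> (1 / lam) *\<^sub>R - 0 + 0 - 0 + 0"
    by (intro tendsto_intros incr_Suc lipschitz_diff_tendsto_zero[OF B_lip incr_Suc]
        lipschitz_diff_tendsto_zero[OF B_lip incr]
        lipschitz_diff_tendsto_zero[OF cocoercive_imp_lipschitz[OF C_coco] incr_Suc])
  then show ?thesis
    by (simp add: residual_def[abs_def])
qed

lemma weak_cluster_point_mem_zeros:
  assumes "z \<in> zeros3 A B C" and "strict_mono r" and "weakly_converges (x \<circ> r) p"
  shows "p \<in> zeros3 A B C"
proof -
  note incr = energy_convergent_and_increments_tendsto_zero(2)[OF assms(1)]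
  have "(\<lambda>k. x (Suc (Suc k)) - x k) \<longlonglongrightarrow> 0"
    using tendsto_add[OF LIMSEQ_Suc[OF incr] incr] by simp
  then have "(\<lambda>n. x (Suc (Suc (r n))) - (x \<circ> r) n) \<longlonglongrightarrow> 0"
    using LIMSEQ_subseq_LIMSEQ[OF _ assms(2)] by (simp add: o_def)
  with assms(3) have "weakly_converges (\<lambda>n. x (Suc (Suc (r n)))) p"
    by (rule weakly_converges_strong_perturbation)
  moreover have "bounded (range (\<lambda>n. x (Suc (Suc (r n)))))"
    using bounded_iterates[OF assms(1)] by (rule bounded_subset) auto
  moreover have "(residual \<circ> r) \<longlonglongrightarrow> 0"
    using residual_tendsto_zero[OF assms(1)] assms(2) by (rule LIMSEQ_subseq_LIMSEQ)
  ultimately have "- (B p + C p) \<in> A p"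
    using residual_mem
    by (intro maximally_monotone_add_lipschitz_demiclosed[OF A_max
          monotone_fun_add[OF B_mono cocoercive_imp_monotone_fun[OF C_coco]]
          lipschitz_on_add[OF B_lip cocoercive_imp_lipschitz[OF C_coco]]]) simp_all
  then show ?thesis
    unfolding zeros3_def by force
qed

theorem iterates_weakly_converge_to_zero:
  assumes "zeros3 A B C \<noteq> {}"
  shows "\<exists>p\<in>zeros3 A B C. weakly_converges x p"
proof -
  obtain z where "z \<in> zeros3 A B C"
    using assms by blast
  show ?thesis
    using bounded_iterates dist_to_zero_convergent weak_cluster_point_mem_zeros \<open>z \<in> zeros3 A B C\<close>
    by (intro Opial_lemma) auto
qed

end

theorem theorem5p2:
  fixes A :: "'a::{real_inner, complete_space} \<Rightarrow> 'a set"
    and B C :: "'a \<Rightarrow> 'a"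
    and L1 L2 lam :: real
    and x :: "int \<Rightarrow> 'a"
  assumes "maximally_monotone A"
    and "monotone_fun B" and "L1-lipschitz_on UNIV B"
    and "cocoercive L2 C"
    and "zeros3 A B C \<noteq> {}"
    and "0 < lam" and "lam < 2 / (4 * L1 + L2)"
    and "\<And>k::nat. x (int k + 1) \<in> resolvent lam A
           (x (int k) - (2 * lam) *\<^sub>R B (x (int k)) + lam *\<^sub>R B (x (int k - 1))
              - lam *\<^sub>R C (x (int k)))"
  shows "\<exists>p \<in> zeros3 A B C. weakly_converges (\<lambda>n. x (int n)) p"
proof -
  interpret forward_reflected_backward_sequence A B C L1 L2 lam "\<lambda>n. x (int n)"
  proof
    fix k
    show "x (int (Suc (Suc k))) \<in> resolvent lam A (x (int (Suc k)) - (2 * lam) *\<^sub>R B (x (int (Suc k)))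
        + lam *\<^sub>R B (x (int k)) - lam *\<^sub>R C (x (int (Suc k))))"
      using assms(8)[of "Suc k"] by (simp add: add.commute)
  qed (fact assms)+
  show ?thesis
    using iterates_weakly_converge_to_zero[OF assms(5)] .
qed

end
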